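(* Let $a,b,c$ be independent Uniform$[0,1]$ random variables and, writing $x \bmod 1 := x-\lfloor x\rfloor$, define $u=(a+b+c)\bmod 1$, $v=(a/2+b/2+c)\bmod 1$, $w=(4a/3+2b/3+c)\bmod 1$, $z=(2a/3+b/3+c)\bmod 1$. Let $Y=(a,b)$ and $X=(u,v,w,z)$. Then each of $u$, $v$, $w$, $z$ is (individually) independent of $Y$, whereas $Y$ is almost surely equal to a measurable function of $X$. *)

theory Defs
  imports "HOL-Probability.Probability"
begin

text \<open>x mod 1 is the library's frac x = x - of_int (floor x).\<close>

end

theory Submission
  imports Defs
begin

text \<open>
  The pair \<open>Y = (a, b)\<close> and \<open>c\<close> are independent, and adding an independent uniform
  variable modulo 1 to any function of \<open>Y\<close> yields a variable that is again uniform and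
  independent of \<open>Y\<close>, because Lebesgue measure on \<open>[0,1)\<close> is invariant under rotations
  \<open>t \<mapsto> frac (s + t)\<close>. Hence each of \<open>u, v, w, z\<close> is independent of \<open>Y\<close>. Jointly,
  however, \<open>c\<close> cancels in differences: almost surely \<open>frac (u - v) = (a + b) / 2\<close> and
  \<open>frac (w - z) = (2a + b) / 3\<close>, a nonsingular linear system for \<open>(a, b)\<close>.
\<close>

lemma borel_measurable_frac [measurable]: "frac \<in> borel_measurable (borel :: real measure)"
  unfolding frac_def by measurable

lemma frac_frac_diff: "frac (frac x - frac y) = frac (x - y)"
  by (metis frac_diff_simp add_uminus_conv_diff frac_add_simps(1))

definition recover_pair :: "real \<times> real \<times> real \<times> real \<Rightarrow> real \<times> real" where
  "recover_pair = (\<lambda>(u, v, w, z).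
     (3 * frac (w - z) - 2 * frac (u - v), 4 * frac (u - v) - 3 * frac (w - z)))"

lemma borel_measurable_recover_pair [measurable]: "recover_pair \<in> borel_measurable borel"
  unfolding recover_pair_def borel_prod[symmetric] by measurable

lemma recover_pair_eq:
  fixes a b c :: real
  assumes "0 \<le> a" "a < 1" "0 \<le> b" "b < 1"
  shows "recover_pair (frac (a + b + c), frac (a / 2 + b / 2 + c),
           frac (4 * a / 3 + 2 * b / 3 + c), frac (2 * a / 3 + b / 3 + c)) = (a, b)"
proof -
  have "a + b + c - (a / 2 + b / 2 + c) = (a + b) / 2"
    and "4 * a / 3 + 2 * b / 3 + c - (2 * a / 3 + b / 3 + c) = (2 * a + b) / 3"
    by (simp_all add: field_simps)
  then have "frac (frac (a + b + c) - frac (a / 2 + b / 2 + c)) = (a + b) / 2"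
    and "frac (frac (4 * a / 3 + 2 * b / 3 + c) - frac (2 * a / 3 + b / 3 + c)) = (2 * a + b) / 3"
    using assms by (simp_all add: frac_frac_diff frac_eq)
  then show ?thesis
    by (simp add: recover_pair_def field_simps)
qed

lemma emeasure_lborel_translate:
  fixes r :: "'a::euclidean_space"
  assumes "S \<in> sets borel"
  shows "emeasure lborel ((\<lambda>t. t + r) -` S) = emeasure lborel S"
proof -
  have "emeasure lborel S = emeasure (distr lborel borel ((+) r)) S"
    by (simp add: lborel_distr_plus)
  also have "\<dots> = emeasure lborel ((+) r -` S)"
    using assms by (subst emeasure_distr) auto
  also have "(+) r -` S = (\<lambda>t. t + r) -` S"
    by (auto simp: add.commute)
  finally show ?thesis ..
qed

lemma emeasure_frac_add_vimage_Ico: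
  fixes s :: real
  assumes A: "A \<in> sets borel"
  shows "emeasure lborel ({t. frac (s + t) \<in> A} \<inter> {0..<1}) = emeasure lborel (A \<inter> {0..<1})"
proof -
  define r where "r = frac s"
  have r: "0 \<le> r" "r < 1"
    by (auto simp: r_def frac_lt_1)
  define T1 where "T1 = (\<lambda>t. t + r) -` (A \<inter> {r..<1})"
  define T2 where "T2 = (\<lambda>t. t + (r - 1)) -` (A \<inter> {0..<r})"
  have split: "{t. frac (s + t) \<in> A} \<inter> {0..<1} = T1 \<union> T2"
  proof (rule set_eqI)
    fix t
    have "frac (s + t) = (if t + r < 1 then t + r else t + (r - 1))" if "0 \<le> t" "t < 1"
    proof -
      have "frac (s + t) = frac (r + t)"
        by (simp add: r_def)
      also have "\<dots> = (if t + r < 1 then t + r else t + (r - 1))"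
        using that r by (simp add: frac_unique_iff)
      finally show ?thesis .
    qed
    then show "t \<in> {t. frac (s + t) \<in> A} \<inter> {0..<1} \<longleftrightarrow> t \<in> T1 \<union> T2"
      using r unfolding T1_def T2_def by (cases "t + r < 1") auto
  qed
  have "T1 \<inter> T2 = {}" "T1 \<in> sets lborel" "T2 \<in> sets lborel"
    using A unfolding T1_def T2_def by auto
  then have "emeasure lborel (T1 \<union> T2) = emeasure lborel T1 + emeasure lborel T2"
    by (simp add: plus_emeasure)
  also have "\<dots> = emeasure lborel (A \<inter> {r..<1}) + emeasure lborel (A \<inter> {0..<r})"
    unfolding T1_def T2_def using A by (simp only: emeasure_lborel_translate sets.Int atLeastLessThan_borel)
  also have "\<dots> = emeasure lborel (A \<inter> {r..<1} \<union> A \<inter> {0..<r})"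
    using A by (subst plus_emeasure) auto
  also have "A \<inter> {r..<1} \<union> A \<inter> {0..<r} = A \<inter> {0..<1}"
    using r by auto
  finally show ?thesis
    using split by simp
qed

lemma emeasure_uniform_unit_interval:
  assumes "S \<in> sets borel"
  shows "emeasure (density lborel (indicator {0..1})) S = emeasure lborel (S \<inter> {0..<1::real})"
proof -
  have "density lborel (indicator {0..1}) = density lborel (indicator {0..<1::real})"
    using AE_lborel_singleton[of 1]
    by (intro density_cong) (auto elim!: eventually_mono simp: indicator_def)
  then show ?thesis
    using assms by (simp add: emeasure_density Int_commute indicator_inter_arith[symmetric])
qed

lemma distr_uniform_frac_add:
  fixes s :: real
  shows "distr (density lborel (indicator {0..1})) borel (\<lambda>t. frac (s + t))
       = density lborel (indicator {0..1})"
proof (rule measure_eqI)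
  fix A :: "real set"
  assume "A \<in> sets (distr (density lborel (indicator {0..1})) borel (\<lambda>t. frac (s + t)))"
  then have A: "A \<in> sets borel"
    by simp
  then have "{t. frac (s + t) \<in> A} \<in> sets borel"
    by measurable
  with A show "emeasure (distr (density lborel (indicator {0..1})) borel (\<lambda>t. frac (s + t))) A
      = emeasure (density lborel (indicator {0..1})) A"
    by (simp add: emeasure_distr vimage_def emeasure_uniform_unit_interval
        emeasure_frac_add_vimage_Ico)
qed simp

text \<open>
  Independence of two random variables is stated via their generated \<sigma>-algebras, because
  \<open>indep_var\<close> requires both variables to have the same codomain type.
\<close>

lemma sets_vimage_algebra_compose_subset:
  assumes "X \<in> S \<rightarrow> space T" "f \<in> measurable T T'"
  shows "sets (vimage_algebra S (\<lambda>\<omega>. f (X \<omega>)) T') \<subseteq> sets (vimage_algebra S X T)"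
proof
  fix E assume "E \<in> sets (vimage_algebra S (\<lambda>\<omega>. f (X \<omega>)) T')"
  then obtain A where "A \<in> sets T'" "E = (\<lambda>\<omega>. f (X \<omega>)) -` A \<inter> S"
    using assms by (auto simp: sets_vimage_algebra2 measurable_def Pi_iff)
  moreover have "(\<lambda>\<omega>. f (X \<omega>)) -` A \<inter> S = X -` (f -` A \<inter> space T) \<inter> S"
    using assms(1) by auto
  ultimately show "E \<in> sets (vimage_algebra S X T)"
    using assms(2) by (metis in_vimage_algebra measurable_sets)
qed

lemma (in prob_space) indep_set_vimage_algebra_compose:
  assumes indep: "indep_set (sets (vimage_algebra (space M) X S)) (sets (vimage_algebra (space M) Y T))"
    and "random_variable S X" "random_variable T Y" "f \<in> measurable S S'" "g \<in> measurable T T'"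
  shows "indep_set (sets (vimage_algebra (space M) (\<lambda>\<omega>. f (X \<omega>)) S'))
                   (sets (vimage_algebra (space M) (\<lambda>\<omega>. g (Y \<omega>)) T'))"
  using indep unfolding indep_set_def
proof (rule indep_sets_mono_sets)
  have "X \<in> space M \<rightarrow> space S" "Y \<in> space M \<rightarrow> space T"
    using assms(2,3) by (simp_all add: measurable_def)
  then show "case_bool (sets (vimage_algebra (space M) (\<lambda>\<omega>. f (X \<omega>)) S'))
                       (sets (vimage_algebra (space M) (\<lambda>\<omega>. g (Y \<omega>)) T')) i
           \<subseteq> case_bool (sets (vimage_algebra (space M) X S)) (sets (vimage_algebra (space M) Y T)) i"
    for i
    using assms(4,5) by (cases i) (simp_all add: sets_vimage_algebra_compose_subset)
qed

lemma (in prob_space) indep_set_vimage_algebra_iff: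
  assumes "random_variable S X" "random_variable T Y"
  shows "indep_set (sets (vimage_algebra (space M) X S)) (sets (vimage_algebra (space M) Y T)) \<longleftrightarrow>
    (\<forall>A\<in>sets S. \<forall>B\<in>sets T. prob (X -` A \<inter> space M \<inter> (Y -` B \<inter> space M))
                             = prob (X -` A \<inter> space M) * prob (Y -` B \<inter> space M))"
  using assms by (simp add: indep_sets2_eq sets_vimage_algebra2 measurable_def) blast

lemma (in prob_space) distr_pair_eq_pair_measure_if_indep_set:
  assumes indep: "indep_set (sets (vimage_algebra (space M) X S)) (sets (vimage_algebra (space M) Y T))"
    and [measurable]: "random_variable S X" "random_variable T Y"
  shows "distr M S X \<Otimes>\<^sub>M distr M T Y = distr M (S \<Otimes>\<^sub>M T) (\<lambda>\<omega>. (X \<omega>, Y \<omega>))"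
proof (rule pair_measure_eqI)
  fix A B assume "A \<in> sets (distr M S X)" "B \<in> sets (distr M T Y)"
  then have [measurable]: "A \<in> sets S" "B \<in> sets T"
    by simp_all
  have "(\<lambda>\<omega>. (X \<omega>, Y \<omega>)) -` (A \<times> B) \<inter> space M = X -` A \<inter> space M \<inter> (Y -` B \<inter> space M)"
    by auto
  then have "emeasure (distr M (S \<Otimes>\<^sub>M T) (\<lambda>\<omega>. (X \<omega>, Y \<omega>))) (A \<times> B)
      = ennreal (prob (X -` A \<inter> space M \<inter> (Y -` B \<inter> space M)))"
    by (simp add: emeasure_distr emeasure_eq_measure)
  also have "\<dots> = ennreal (prob (X -` A \<inter> space M)) * ennreal (prob (Y -` B \<inter> space M))"
    using indep by (simp add: indep_set_vimage_algebra_iff ennreal_mult)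
  also have "\<dots> = emeasure (distr M S X) A * emeasure (distr M T Y) B"
    by (simp add: emeasure_distr emeasure_eq_measure)
  finally show "emeasure (distr M S X) A * emeasure (distr M T Y) B
      = emeasure (distr M (S \<Otimes>\<^sub>M T) (\<lambda>\<omega>. (X \<omega>, Y \<omega>))) (A \<times> B)" ..
qed (auto intro!: prob_space_imp_sigma_finite prob_space_distr)

lemma (in prob_space) indep_set_pair_component:
  fixes X :: "'i \<Rightarrow> 'a \<Rightarrow> 'b::second_countable_topology"
  assumes indep: "indep_vars (\<lambda>_. borel) X {i, j, k}" and "k \<noteq> i" "k \<noteq> j"
  shows "indep_set (sets (vimage_algebra (space M) (\<lambda>\<omega>. (X i \<omega>, X j \<omega>)) borel))
                   (sets (vimage_algebra (space M) (X k) borel))"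
proof -
  define R where "R J \<omega> = restrict (\<lambda>i. X i \<omega>) J" for J \<omega>
  have rv: "random_variable (PiM J (\<lambda>_. borel)) (R J)" if "J \<subseteq> {i, j, k}" for J
    unfolding R_def using indep that by (auto simp: indep_vars_def intro!: measurable_restrict)
  have rv_ij: "random_variable (PiM {i, j} (\<lambda>_. borel)) (R {i, j})"
    and rv_k: "random_variable (PiM {k} (\<lambda>_. borel)) (R {k})"
    by (simp_all add: rv)
  have "indep_var (PiM {i, j} (\<lambda>_. borel)) (R {i, j}) (PiM {k} (\<lambda>_. borel)) (R {k})"
    unfolding R_def using assms by (intro indep_var_restrict[OF indep]) auto
  then have "indep_set (sets (vimage_algebra (space M) (R {i, j}) (PiM {i, j} (\<lambda>_. borel))))
                       (sets (vimage_algebra (space M) (R {k}) (PiM {k} (\<lambda>_. borel))))"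
    unfolding indep_var_eq sets_vimage_algebra by blast
  moreover have "(\<lambda>f. (f i, f j)) \<in> measurable (PiM {i, j} (\<lambda>_. borel :: 'b measure)) borel"
    by measurable
  moreover have "(\<lambda>f. f k) \<in> measurable (PiM {k} (\<lambda>_. borel :: 'b measure)) borel"
    by measurable
  ultimately have "indep_set (sets (vimage_algebra (space M) (\<lambda>\<omega>. (\<lambda>f. (f i, f j)) (R {i, j} \<omega>)) borel))
                       (sets (vimage_algebra (space M) (\<lambda>\<omega>. (\<lambda>f. f k) (R {k} \<omega>)) borel))"
    by (rule indep_set_vimage_algebra_compose[OF _ rv_ij rv_k])
  then show ?thesis
    by (simp add: R_def)
qed

lemma (in prob_space) AE_uniform_unit_interval:
  assumes "distributed M lborel X (indicator {0..1})"
  shows "AE \<omega> in M. 0 \<le> X \<omega> \<and> X \<omega> < (1::real)"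
proof -
  have "AE x in lborel. 0 < (indicator {0..1} x :: ennreal) \<longrightarrow> 0 \<le> x \<and> x < (1::real)"
    using AE_lborel_singleton[of 1] by eventually_elim (auto simp: indicator_def)
  then have "AE x in density lborel (indicator {0..1}). 0 \<le> x \<and> x < (1::real)"
    by (subst AE_density) auto
  moreover have "distr M lborel X = density lborel (indicator {0..1})"
    using assms by (simp add: distributed_def)
  ultimately have "AE x in distr M lborel X. 0 \<le> x \<and> x < (1::real)"
    by (simp only:)
  then show ?thesis
    using assms by (subst (asm) AE_distr_iff) (auto simp: distributed_def)
qed

lemma (in prob_space) indep_set_frac_add_uniform:
  fixes Y :: "'a \<Rightarrow> 'b" and c :: "'a \<Rightarrow> real"
  assumes indep: "indep_set (sets (vimage_algebra (space M) Y N)) (sets (vimage_algebra (space M) c borel))"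
    and Y [measurable]: "random_variable N Y" and [measurable]: "\<phi> \<in> borel_measurable N"
    and uniform: "distributed M lborel c (indicator {0..1})"
  shows "indep_set (sets (vimage_algebra (space M) (\<lambda>\<omega>. frac (\<phi> (Y \<omega>) + c \<omega>)) borel))
                   (sets (vimage_algebra (space M) Y N))"
proof -
  define U where "U = density lborel (indicator {0..1::real})"
  define W where "W \<omega> = frac (\<phi> (Y \<omega>) + c \<omega>)" for \<omega>
  define DY where "DY = distr M N Y"
  have [measurable]: "c \<in> borel_measurable M"
    using uniform by (simp add: distributed_def)
  then have [measurable]: "W \<in> borel_measurable M"
    unfolding W_def by measurable
  have "distr M borel c = distr M lborel c"
    by (rule distr_cong) auto
  then have DC: "distr M borel c = U"
    using uniform by (simp add: distributed_def U_def)
  interpret U: prob_space U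
    unfolding DC[symmetric] by (rule prob_space_distr) simp
  interpret DY: prob_space DY
    unfolding DY_def by (rule prob_space_distr) simp
  have joint: "DY \<Otimes>\<^sub>M U = distr M (N \<Otimes>\<^sub>M borel) (\<lambda>\<omega>. (Y \<omega>, c \<omega>))"
    using distr_pair_eq_pair_measure_if_indep_set[OF indep] by (simp add: DY_def DC)
  have rectangle: "emeasure M (W -` A \<inter> space M \<inter> (Y -` B \<inter> space M)) = emeasure U A * emeasure DY B"
    if [measurable]: "A \<in> sets borel" "B \<in> sets N" for A B
  proof -
    define S where "S = {p \<in> space (N \<Otimes>\<^sub>M borel). frac (\<phi> (fst p) + snd p) \<in> A \<and> fst p \<in> B}"
    have [measurable]: "S \<in> sets (N \<Otimes>\<^sub>M borel)"
      unfolding S_def by measurable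
    have "W -` A \<inter> space M \<inter> (Y -` B \<inter> space M) = (\<lambda>\<omega>. (Y \<omega>, c \<omega>)) -` S \<inter> space M"
      using measurable_space[OF Y] by (auto simp: W_def S_def space_pair_measure)
    also have "emeasure M \<dots> = emeasure (DY \<Otimes>\<^sub>M U) S"
      by (simp add: joint emeasure_distr)
    also have "\<dots> = (\<integral>\<^sup>+y. emeasure U (Pair y -` S) \<partial>DY)"
      by (rule U.emeasure_pair_measure_alt) (simp add: U_def DY_def)
    also have "\<dots> = (\<integral>\<^sup>+y. emeasure U A * indicator B y \<partial>DY)"
    proof (rule nn_integral_cong)
      fix y
      have "emeasure U {t. frac (\<phi> y + t) \<in> A} = emeasure (distr U borel (\<lambda>t. frac (\<phi> y + t))) A"
        by (simp add: emeasure_distr vimage_def U_def)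
      also have "\<dots> = emeasure U A"
        by (simp add: U_def distr_uniform_frac_add)
      moreover have "Pair y -` S = (if y \<in> B then {t. frac (\<phi> y + t) \<in> A} else {})"
        using sets.sets_into_space[OF \<open>B \<in> sets N\<close>] by (auto simp: S_def space_pair_measure)
      ultimately show "emeasure U (Pair y -` S) = emeasure U A * indicator B y"
        by simp
    qed
    also have "\<dots> = emeasure U A * emeasure DY B"
      by (simp add: DY_def nn_integral_cmult_indicator)
    finally show ?thesis .
  qed
  have marginal: "emeasure M (W -` A \<inter> space M) = emeasure U A" if "A \<in> sets borel" for A
  proof -
    have "Y -` space N \<inter> space M = space M"
      using measurable_space[OF Y] by auto
    moreover have "emeasure DY (space N) = 1"
      using DY.emeasure_space_1 by (simp add: DY_def)
    ultimately show ?thesis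
      using rectangle[OF that sets.top] by simp
  qed
  have "prob (W -` A \<inter> space M \<inter> (Y -` B \<inter> space M)) = prob (W -` A \<inter> space M) * prob (Y -` B \<inter> space M)"
    if [measurable]: "A \<in> sets borel" "B \<in> sets N" for A B
  proof -
    have "ennreal (prob (W -` A \<inter> space M \<inter> (Y -` B \<inter> space M)))
        = ennreal (prob (W -` A \<inter> space M)) * ennreal (prob (Y -` B \<inter> space M))"
      using rectangle[OF that] marginal[OF that(1)]
      by (simp add: emeasure_eq_measure DY_def emeasure_distr)
    then show ?thesis
      by (metis ennreal_inj ennreal_mult measure_nonneg mult_nonneg_nonneg)
  qed
  then have "indep_set (sets (vimage_algebra (space M) W borel)) (sets (vimage_algebra (space M) Y N))"
    by (simp add: indep_set_vimage_algebra_iff)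
  then show ?thesis
    unfolding W_def[abs_def] .
qed

theorem mainTheorem5:
  fixes M :: "'s measure" and a b c :: "'s \<Rightarrow> real"
  assumes "prob_space M"
    and "prob_space.indep_vars M (\<lambda>_. borel) (\<lambda>i::nat. [a, b, c] ! i) {0, 1, 2}"
    and "distributed M lborel a (indicator {0..1})"
    and "distributed M lborel b (indicator {0..1})"
    and "distributed M lborel c (indicator {0..1})"
  defines "u \<equiv> (\<lambda>\<omega>. frac (a \<omega> + b \<omega> + c \<omega>))"
    and "v \<equiv> (\<lambda>\<omega>. frac (a \<omega> / 2 + b \<omega> / 2 + c \<omega>))"
    and "w \<equiv> (\<lambda>\<omega>. frac (4 * a \<omega> / 3 + 2 * b \<omega> / 3 + c \<omega>))"
    and "z \<equiv> (\<lambda>\<omega>. frac (2 * a \<omega> / 3 + b \<omega> / 3 + c \<omega>))"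
    and "Y \<equiv> (\<lambda>\<omega>. (a \<omega>, b \<omega>))"
  shows "prob_space.indep_set M (sets (vimage_algebra (space M) u borel)) (sets (vimage_algebra (space M) Y borel))
       \<and> prob_space.indep_set M (sets (vimage_algebra (space M) v borel)) (sets (vimage_algebra (space M) Y borel))
       \<and> prob_space.indep_set M (sets (vimage_algebra (space M) w borel)) (sets (vimage_algebra (space M) Y borel))
       \<and> prob_space.indep_set M (sets (vimage_algebra (space M) z borel)) (sets (vimage_algebra (space M) Y borel))
       \<and> (\<exists>g \<in> borel_measurable borel. AE \<omega> in M. Y \<omega> = g (u \<omega>, v \<omega>, w \<omega>, z \<omega>))"
proof -
  interpret prob_space M by fact
  have [measurable]: "a \<in> borel_measurable M" "b \<in> borel_measurable M"
    using assms(3,4) by (simp_all add: distributed_def)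
  have indep_Y_c: "indep_set (sets (vimage_algebra (space M) Y borel)) (sets (vimage_algebra (space M) c borel))"
    using indep_set_pair_component[OF assms(2)] by (simp add: Y_def)
  have indep: "indep_set (sets (vimage_algebra (space M) (\<lambda>\<omega>. frac (p * a \<omega> + q * b \<omega> + c \<omega>)) borel))
                         (sets (vimage_algebra (space M) Y borel))" for p q :: real
  proof -
    have "(\<lambda>(x, y). p * x + q * y) \<in> borel_measurable (borel :: (real \<times> real) measure)"
      unfolding borel_prod[symmetric] by measurable
    then show ?thesis
      using indep_set_frac_add_uniform[OF indep_Y_c _ _ assms(5), where \<phi> = "\<lambda>(x, y). p * x + q * y"]
      by (simp add: Y_def)
  qed
  have "indep_set (sets (vimage_algebra (space M) u borel)) (sets (vimage_algebra (space M) Y borel))"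
    and "indep_set (sets (vimage_algebra (space M) v borel)) (sets (vimage_algebra (space M) Y borel))"
    and "indep_set (sets (vimage_algebra (space M) w borel)) (sets (vimage_algebra (space M) Y borel))"
    and "indep_set (sets (vimage_algebra (space M) z borel)) (sets (vimage_algebra (space M) Y borel))"
    using indep[of 1 1] indep[of "1/2" "1/2"] indep[of "4/3" "2/3"] indep[of "2/3" "1/3"]
    by (simp_all add: u_def v_def w_def z_def)
  moreover have "AE \<omega> in M. Y \<omega> = recover_pair (u \<omega>, v \<omega>, w \<omega>, z \<omega>)"
    using AE_uniform_unit_interval[OF assms(3)] AE_uniform_unit_interval[OF assms(4)]
    by eventually_elim (simp add: recover_pair_eq Y_def u_def v_def w_def z_def)
  ultimately show ?thesis
    using borel_measurable_recover_pair by blast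
qed

end
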